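(* Let $t_\varepsilon$, $t$, $s_\varepsilon$, $s$ be as defined below. Then $\partial_Ut_\varepsilon\to\partial_Ut$ and $\partial_Us_\varepsilon\to\partial_Us$ as $\varepsilon\to0$, uniformly on compact subsets of $\{(U,X^1,X^2,V)\in\mathbb{R}^4: U\neq0\}=(\mathbb{R}\setminus\{0\})\times\mathbb{R}^3$.
   Context: Strict delta net: a net $(\delta_\varepsilon)_{\varepsilon\in(0,1]}$ of smooth compactly supported functions on $\mathbb{R}$ with $\operatorname{supp}\delta_\varepsilon\subseteq[-\varepsilon,\varepsilon]$, $\int\delta_\varepsilon\to1$ as $\varepsilon\to0$, and $\int|\delta_\varepsilon|\le C$ for some $C>0$ and small $\varepsilon$. The transformations: fix $f\in C^\infty(\mathbb{R}^2,\mathbb{R})$ and a strict delta net $(\delta_\varepsilon)_\varepsilon$; write $X=(X^1,X^2)$. Let $(x_\varepsilon)_\varepsilon=(x_\varepsilon^1,x_\varepsilon^2)_\varepsilon\in C^\infty(\mathbb{R}^2\times\mathbb{R},\mathbb{R}^2)^{(0,1]}$ be a fixed net such that for every compact $K\subseteq\mathbb{R}^2$ there is $\varepsilon_K$ such that for all $X\in K$ and $\varepsilon\le\varepsilon_K$, $U\mapsto x_\varepsilon(X,U)$ is the solution on all of $\mathbb{R}$ of $\partial_U^2x_\varepsilon^i(X,U)=\frac12\partial_if(x_\varepsilon(X,U))\,\delta_\varepsilon(U)$, $x_\varepsilon^i(X,-1)=X^i$, $\partial_Ux_\varepsilon^i(X,-1)=0$ ($i=1,2$) (such a net exists). Write $\dot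 x_\varepsilon^i=\partial_U x_\varepsilon^i$. Define $$w_\varepsilon(X,V,U)=V+\int_{-\varepsilon}^U\int_{-\varepsilon}^s\sum_{i=1}^2\partial_if(x_\varepsilon(X,r))\,\dot x_\varepsilon^i(X,r)\,\delta_\varepsilon(r)\,dr\,ds,\qquad v_\varepsilon(X,V,U)=w_\varepsilon(X,V,U)+\int_{-\varepsilon}^U f(x_\varepsilon(X,s))\delta_\varepsilon(s)\,ds,$$ $t_\varepsilon(U,X^1,X^2,V)=(U,x_\varepsilon^1(X,U),x_\varepsilon^2(X,U),v_\varepsilon(X,V,U))$ and $s_\varepsilon(U,X^1,X^2,V)=(U,x_\varepsilon^1(X,U),x_\varepsilon^2(X,U),w_\varepsilon(X,V,U))$. The limits: with $U_+=\max(U,0)$ and $H$ the Heaviside function ($H(U)=0$ for $U<0$, $H(U)=1$ for $U>0$), $x^i(X,U)=X^i+\frac12\partial_if(X)\,U_+$, $v(X,V,U)=V+f(X)H(U)+\frac14\sum_{i=1}^2(\partial_if(X))^2U_+$, $w(X,V,U)=V+\frac14\sum_{i=1}^2(\partial_if(X))^2U_+$, $t(U,X^1,X^2,V)=(U,x^1(X,U),x^2(X,U),v(X,V,U))$, $s(U,X^1,X^2,V)=(U,x^1(X,U),x^2(X,U),w(X,V,U))$; these are smooth for $U\ne0$. *)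

theory Defs
  imports "HOL-Analysis.Analysis"
begin

definition pdir :: "'a::euclidean_space \<Rightarrow> ('a \<Rightarrow> 'b::real_normed_vector) \<Rightarrow> 'a \<Rightarrow> 'b" where
  "pdir v g x = vector_derivative (\<lambda>t. g (x + t *\<^sub>R v)) (at 0)"

fun iter_pd :: "'a::euclidean_space list \<Rightarrow> ('a \<Rightarrow> 'b::real_normed_vector) \<Rightarrow> 'a \<Rightarrow> 'b" where
  "iter_pd [] g = g"
| "iter_pd (v # vs) g = pdir v (iter_pd vs g)"

definition smooth :: "('a::euclidean_space \<Rightarrow> 'b::real_normed_vector) \<Rightarrow> bool" where
  "smooth g \<longleftrightarrow> (\<forall>vs. set vs \<subseteq> Basis \<longrightarrow>
      continuous_on UNIV (iter_pd vs g) \<and>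
      (\<forall>v\<in>Basis. \<forall>x. (\<lambda>t. iter_pd vs g (x + t *\<^sub>R v)) differentiable (at 0)))"

definition strict_delta_net :: "(real \<Rightarrow> real \<Rightarrow> real) \<Rightarrow> bool" where
  "strict_delta_net \<delta> \<longleftrightarrow>
     (\<forall>e\<in>{0<..1}. smooth (\<delta> e) \<and> (\<forall>u. \<delta> e u \<noteq> 0 \<longrightarrow> u \<in> {-e..e}))
   \<and> ((\<lambda>e. integral UNIV (\<delta> e)) \<longlongrightarrow> 1) (at_right 0)
   \<and> (\<exists>C>0. \<forall>\<^sub>F e in at_right 0. integral UNIV (\<lambda>u. \<bar>\<delta> e u\<bar>) \<le> C)"

definition pd1 :: "(real \<times> real \<Rightarrow> real) \<Rightarrow> real \<times> real \<Rightarrow> real" where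
  "pd1 f X = deriv (\<lambda>a. f (a, snd X)) (fst X)"

definition pd2 :: "(real \<times> real \<Rightarrow> real) \<Rightarrow> real \<times> real \<Rightarrow> real" where
  "pd2 f X = deriv (\<lambda>b. f (fst X, b)) (snd X)"

definition oint :: "real \<Rightarrow> real \<Rightarrow> (real \<Rightarrow> real) \<Rightarrow> real" where
  "oint a b g = (if a \<le> b then integral {a..b} g else - integral {b..a} g)"

definition posp :: "real \<Rightarrow> real" where "posp U = max U 0"

definition heav :: "real \<Rightarrow> real" where "heav U = (if U > 0 then 1 else 0)"

text \<open>x e X U = x_eps(X,U) in R^2; xd = partial_U x_eps.\<close>
definition xd :: "(real \<Rightarrow> real \<times> real \<Rightarrow> real \<Rightarrow> real \<times> real) \<Rightarrow> real \<Rightarrow> real \<times> real \<Rightarrow> real \<Rightarrow> real \<times> real" where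
  "xd x e X U = vector_derivative (\<lambda>r. x e X r) (at U)"

definition w_eps where
  "w_eps f \<delta> x e X V U = V + oint (-e) U (\<lambda>s. oint (-e) s (\<lambda>r.
      (pd1 f (x e X r) * fst (xd x e X r) + pd2 f (x e X r) * snd (xd x e X r)) * \<delta> e r))"

definition v_eps where
  "v_eps f \<delta> x e X V U = w_eps f \<delta> x e X V U + oint (-e) U (\<lambda>s. f (x e X s) * \<delta> e s)"

definition t_eps :: "(real \<times> real \<Rightarrow> real) \<Rightarrow> (real \<Rightarrow> real \<Rightarrow> real) \<Rightarrow>
    (real \<Rightarrow> real \<times> real \<Rightarrow> real \<Rightarrow> real \<times> real) \<Rightarrow> real \<Rightarrow>
    real \<times> real \<times> real \<times> real \<Rightarrow> real \<times> real \<times> real \<times> real" where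
  "t_eps f \<delta> x e p = (case p of (U, X1, X2, V) \<Rightarrow>
     (U, fst (x e (X1, X2) U), snd (x e (X1, X2) U), v_eps f \<delta> x e (X1, X2) V U))"

definition s_eps :: "(real \<times> real \<Rightarrow> real) \<Rightarrow> (real \<Rightarrow> real \<Rightarrow> real) \<Rightarrow>
    (real \<Rightarrow> real \<times> real \<Rightarrow> real \<Rightarrow> real \<times> real) \<Rightarrow> real \<Rightarrow>
    real \<times> real \<times> real \<times> real \<Rightarrow> real \<times> real \<times> real \<times> real" where
  "s_eps f \<delta> x e p = (case p of (U, X1, X2, V) \<Rightarrow>
     (U, fst (x e (X1, X2) U), snd (x e (X1, X2) U), w_eps f \<delta> x e (X1, X2) V U))"

definition x_lim :: "(real \<times> real \<Rightarrow> real) \<Rightarrow> real \<times> real \<Rightarrow> real \<Rightarrow> real \<times> real" where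
  "x_lim f X U = (fst X + 1/2 * pd1 f X * posp U, snd X + 1/2 * pd2 f X * posp U)"

definition w_lim :: "(real \<times> real \<Rightarrow> real) \<Rightarrow> real \<times> real \<Rightarrow> real \<Rightarrow> real \<Rightarrow> real" where
  "w_lim f X V U = V + 1/4 * ((pd1 f X)\<^sup>2 + (pd2 f X)\<^sup>2) * posp U"

definition v_lim :: "(real \<times> real \<Rightarrow> real) \<Rightarrow> real \<times> real \<Rightarrow> real \<Rightarrow> real \<Rightarrow> real" where
  "v_lim f X V U = V + f X * heav U + 1/4 * ((pd1 f X)\<^sup>2 + (pd2 f X)\<^sup>2) * posp U"

definition t_lim :: "(real \<times> real \<Rightarrow> real) \<Rightarrow>
    real \<times> real \<times> real \<times> real \<Rightarrow> real \<times> real \<times> real \<times> real" where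
  "t_lim f p = (case p of (U, X1, X2, V) \<Rightarrow>
     (U, fst (x_lim f (X1, X2) U), snd (x_lim f (X1, X2) U), v_lim f (X1, X2) V U))"

definition s_lim :: "(real \<times> real \<Rightarrow> real) \<Rightarrow>
    real \<times> real \<times> real \<times> real \<Rightarrow> real \<times> real \<times> real \<times> real" where
  "s_lim f p = (case p of (U, X1, X2, V) \<Rightarrow>
     (U, fst (x_lim f (X1, X2) U), snd (x_lim f (X1, X2) U), w_lim f (X1, X2) V U))"

definition dU :: "(real \<times> real \<times> real \<times> real \<Rightarrow> 'b::real_normed_vector) \<Rightarrow>
    real \<times> real \<times> real \<times> real \<Rightarrow> 'b" where
  "dU F p = (case p of (U, Y) \<Rightarrow> vector_derivative (\<lambda>u. F (u, Y)) (at U))"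

end

theory Submission
  imports Defs
begin

(* Fix a pulse width e and a starting point X = (X1, X2).  The curve U |-> x_e(X,U)
   is a particle at rest at X before time -e whose velocity receives the kick
   (delta_e(U) / 2) * grad f(x_e(X,U)).  Since delta_e vanishes outside [-e,e] (also at the
   endpoints, by continuity), the velocity is 0 for U <= -e and constant for U >= e.  Moreover
   d/dU |xdot|^2 = (grad f . xdot) * delta_e, so the double integral in w_eps equals the
   integral of |xdot|^2; hence dU s_eps = (1, xdot, |xdot|^2) and dU t_eps differs from it
   only by f * delta_e, which vanishes for |U| > e.  The limit maps have the same form with
   xdot replaced by H(U) * grad f(X) / 2.  So everything reduces to the convergence of the
   velocity after the kick to half the gradient, uniformly for X in a compact set.  This
   follows from a continuous-induction (bootstrap) argument: while the particle stays within
   distance 1 of X its velocity is bounded by M*C/2 (M a bound of the force, C a bound of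
   the L1 norm of delta_e), so it moves at most e*M*C and never leaves; then the kick differs
   from (integral delta_e / 2) * grad f(X) by at most the oscillation of grad f on that ball. *)

lemma oint_fundamental:
  fixes F F' :: "real \<Rightarrow> real"
  assumes "\<And>u. (F has_real_derivative F' u) (at u)"
  shows "oint a b F' = F b - F a"
proof -
  have "(F' has_integral (F (max a b) - F (min a b))) {min a b..max a b}"
    by (rule fundamental_theorem_of_calculus)
       (auto simp: has_real_derivative_iff_has_vector_derivative[symmetric]
             intro: has_field_derivative_at_within assms)
  then show ?thesis
    by (auto simp: oint_def integral_unique min_def max_def split: if_splits)
qed

lemma oint_has_real_derivative:
  fixes g :: "real \<Rightarrow> real"
  assumes g: "continuous_on UNIV g"
  shows "((\<lambda>u. oint a u g) has_real_derivative g U) (at U)"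
proof -
  define lo where "lo = min a U - 1"
  have int: "g integrable_on {c..d}" for c d
    by (rule integrable_continuous_real) (rule continuous_on_subset[OF g], simp)
  have split: "oint a u g = integral {lo..u} g - integral {lo..a} g" if "lo < u" for u
  proof (cases "a \<le> u")
    case True
    have "integral {lo..a} g + integral {a..u} g = integral {lo..u} g"
      by (rule Henstock_Kurzweil_Integration.integral_combine) (use True that in \<open>auto simp: lo_def intro: int\<close>)
    then show ?thesis using True by (simp add: oint_def)
  next
    case False
    have "integral {lo..u} g + integral {u..a} g = integral {lo..a} g"
      by (rule Henstock_Kurzweil_Integration.integral_combine) (use False that in \<open>auto intro: int\<close>)
    then show ?thesis using False by (simp add: oint_def)
  qed
  have "((\<lambda>u. integral {lo..u} g) has_real_derivative g U) (at U within {lo..U+1})"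
    by (rule integral_has_real_derivative) (auto simp: lo_def intro: continuous_on_subset[OF g])
  then have "((\<lambda>u. integral {lo..u} g) has_real_derivative g U) (at U)"
    by (simp add: at_within_Icc_at lo_def)
  then have "((\<lambda>u. integral {lo..u} g - integral {lo..a} g) has_real_derivative g U) (at U)"
    by (auto intro!: derivative_eq_intros)
  then show ?thesis
    by (rule has_field_derivative_transform_within_open[where S="{lo<..}"])
       (auto simp: lo_def split)
qed

text \<open>Continuous induction: if \<open>\<phi> < r\<close> on \<open>[lo,t)\<close> always forces \<open>\<phi> t \<le> \<rho>\<close> with
  \<open>\<rho> < r\<close>, then \<open>\<phi> \<le> \<rho>\<close> on the whole interval; look at the first time where \<open>\<phi> \<ge> r\<close>.\<close>
lemma continuous_barrier:
  fixes \<phi> :: "real \<Rightarrow> real"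
  assumes cont: "continuous_on {lo..hi} \<phi>" and "\<rho> < r"
    and step: "\<And>t. t \<in> {lo..hi} \<Longrightarrow> (\<And>s. s \<in> {lo..<t} \<Longrightarrow> \<phi> s < r) \<Longrightarrow> \<phi> t \<le> \<rho>"
    and t: "t \<in> {lo..hi}"
  shows "\<phi> t \<le> \<rho>"
proof -
  define Bad where "Bad = {lo..hi} \<inter> \<phi> -` {r..}"
  have below: "\<phi> s < r" if "s \<in> {lo..hi}" "s \<notin> Bad" for s
    using that by (auto simp: Bad_def)
  have "Bad = {}"
  proof (rule ccontr)
    assume "Bad \<noteq> {}"
    moreover have "bdd_below Bad"
      by (rule bdd_belowI[of _ lo]) (auto simp: Bad_def)
    moreover have "closed Bad"
      unfolding Bad_def by (rule continuous_closed_preimage[OF cont]) auto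
    ultimately have first: "Inf Bad \<in> Bad"
      by (rule closed_contains_Inf)
    have "\<phi> s < r" if "s \<in> {lo..<Inf Bad}" for s
    proof (rule below)
      show "s \<in> {lo..hi}" using that first by (auto simp: Bad_def)
      show "s \<notin> Bad" using that cInf_lower[OF _ \<open>bdd_below Bad\<close>] by force
    qed
    with step have "\<phi> (Inf Bad) \<le> \<rho>" using first by (auto simp: Bad_def)
    with first \<open>\<rho> < r\<close> show False by (auto simp: Bad_def)
  qed
  then show ?thesis
    using step[OF t] below t by force
qed

lemma support_in_open_interval:
  fixes d :: "real \<Rightarrow> real"
  assumes cont: "continuous_on UNIV d" and supp: "\<And>r. d r \<noteq> 0 \<Longrightarrow> r \<in> {-e..e}"
    and "d r \<noteq> 0"
  shows "r \<in> {-e<..<e}"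
proof -
  have closed: "closed (d -` {0})"
    by (rule continuous_closed_vimage[OF closed_singleton]) (use cont continuous_on_eq_continuous_within in blast)
  have "closure {..<-e} \<subseteq> d -` {0}" "closure {e<..} \<subseteq> d -` {0}"
    by (rule closure_minimal[OF _ closed], use supp in force)+
  then have "r \<notin> {..-e}" "r \<notin> {e..}" using \<open>d r \<noteq> 0\<close> by auto
  then show ?thesis by simp
qed

lemma constant_where_derivative_vanishes:
  fixes g :: "real \<Rightarrow> 'b::real_normed_vector"
  assumes "convex S" and "\<And>v. v \<in> S \<Longrightarrow> (g has_vector_derivative 0) (at v)"
    and "u \<in> S" "w \<in> S"
  shows "g u = g w"
proof -
  obtain c where "\<And>v. v \<in> S \<Longrightarrow> g v = c"
    using has_vector_derivative_zero_constant[OF assms(1)] assms(2)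
    by (metis has_vector_derivative_at_within)
  then show ?thesis using assms(3,4) by simp
qed

section \<open>Impulsive trajectories\<close>

locale impulsive_trajectory =
  fixes e :: real and d :: "real \<Rightarrow> real" and G :: "'a::euclidean_space \<Rightarrow> 'a"
    and a b :: "real \<Rightarrow> 'a" and X :: 'a
  assumes e_pos: "0 < e" and e_le_1: "e \<le> 1"
    and d_cont: "continuous_on UNIV d"
    and d_supp: "\<And>r. d r \<noteq> 0 \<Longrightarrow> r \<in> {-e..e}"
    and G_cont: "continuous_on UNIV G"
    and a_init: "a (-1) = X" and b_init: "b (-1) = 0"
    and a_deriv: "\<And>u. (a has_vector_derivative b u) (at u)"
    and b_deriv: "\<And>u. (b has_vector_derivative (d u / 2) *\<^sub>R G (a u)) (at u)"
begin

lemma d_vanishes: "u \<le> -e \<or> e \<le> u \<Longrightarrow> d u = 0"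
  using support_in_open_interval[OF d_cont d_supp, of u] by force

lemma a_cont: "continuous_on UNIV a"
  using a_deriv by (meson continuous_at_imp_continuous_on has_vector_derivative_continuous)

lemma b_cont: "continuous_on UNIV b"
  using b_deriv by (meson continuous_at_imp_continuous_on has_vector_derivative_continuous)

lemma b_deriv_outside: "u \<le> -e \<or> e \<le> u \<Longrightarrow> (b has_vector_derivative 0) (at u)"
  using b_deriv[of u] d_vanishes[of u] by simp

lemma before_impulse:
  assumes "u \<le> -e"
  shows "b u = 0" and "a u = X"
proof -
  have "-1 \<le> -e" using e_le_1 by simp
  have b_zero: "b v = 0" if "v \<le> -e" for v
  proof -
    have "b v = b (-1)"
      using b_deriv_outside that \<open>-1 \<le> -e\<close>
      by (intro constant_where_derivative_vanishes[of "{..-e}"]) auto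
    then show ?thesis using b_init by simp
  qed
  then show "b u = 0" using assms .
  have "(a has_vector_derivative 0) (at v)" if "v \<le> -e" for v
    using a_deriv[of v] b_zero[OF that] by simp
  then have "a u = a (-1)"
    using assms \<open>-1 \<le> -e\<close> by (intro constant_where_derivative_vanishes[of "{..-e}"]) auto
  then show "a u = X" using a_init by simp
qed

lemma after_impulse:
  assumes "e \<le> u"
  shows "b u = b e"
  using b_deriv_outside assms
  by (intro constant_where_derivative_vanishes[of "{e..}"]) auto

lemma velocity_integral:
  assumes "-e \<le> u"
  shows "((\<lambda>r. (d r / 2) *\<^sub>R G (a r)) has_integral b u) {-e..u}"
  using fundamental_theorem_of_calculus[OF assms, of b "\<lambda>r. (d r / 2) *\<^sub>R G (a r)"]
    b_deriv before_impulse(1)[of "-e"]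
  by (auto intro: has_vector_derivative_at_within)

text \<open>Energy identity: the derivative of \<open>|b|\<^sup>2\<close> is \<open>(G(a) \<bullet> b) d\<close>, so its integral from \<open>-e\<close>
  recovers the squared speed.\<close>
lemma speed_squared:
  "oint (-e) s (\<lambda>r. inner (G (a r)) (b r) * d r) = (norm (b s))\<^sup>2"
proof -
  have "((\<lambda>r. inner (b r) (b r)) has_real_derivative inner (G (a u)) (b u) * d u) (at u)" for u
    using bounded_bilinear.has_vector_derivative[OF bounded_bilinear_inner b_deriv b_deriv, of u]
    by (simp add: has_real_derivative_iff_has_vector_derivative inner_commute algebra_simps)
  from oint_fundamental[OF this] show ?thesis
    using before_impulse(1)[of "-e"] by (simp add: power2_norm_eq_inner)
qed

lemma abs_d_integrable: "(\<lambda>r. \<bar>d r\<bar>) integrable_on {s..t}"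
  by (rule integrable_continuous_real) (intro continuous_intros continuous_on_subset[OF d_cont], simp)

lemma pulse_weighted_bound:
  fixes v :: "real \<Rightarrow> 'b::banach"
  assumes i: "((\<lambda>r. (d r / 2) *\<^sub>R v r) has_integral i) {-e..z}" and "z \<le> e"
    and v_bound: "\<And>r. r \<in> {-e..z} \<Longrightarrow> norm (v r) \<le> B" and "0 \<le> B"
    and C: "integral {-e..e} (\<lambda>r. \<bar>d r\<bar>) \<le> C"
  shows "norm i \<le> B * C / 2"
proof -
  have "norm i = norm (integral {-e..z} (\<lambda>r. (d r / 2) *\<^sub>R v r))"
    using integral_unique[OF i] by simp
  also have "\<dots> \<le> integral {-e..z} (\<lambda>r. B / 2 * \<bar>d r\<bar>)"
  proof (rule Henstock_Kurzweil_Integration.integral_norm_bound_integral)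
    show "(\<lambda>r. (d r / 2) *\<^sub>R v r) integrable_on {-e..z}" using i by blast
    show "(\<lambda>r. B / 2 * \<bar>d r\<bar>) integrable_on {-e..z}"
      using integrable_on_mult_right[OF abs_d_integrable] by simp
    show "norm ((d r / 2) *\<^sub>R v r) \<le> B / 2 * \<bar>d r\<bar>" if "r \<in> {-e..z}" for r
      using mult_left_mono[OF v_bound[OF that], of "\<bar>d r\<bar> / 2"] by (simp add: mult.commute)
  qed
  also have "\<dots> = B / 2 * integral {-e..z} (\<lambda>r. \<bar>d r\<bar>)"
    by simp
  also have "\<dots> \<le> B / 2 * integral {-e..e} (\<lambda>r. \<bar>d r\<bar>)"
    using \<open>0 \<le> B\<close> \<open>z \<le> e\<close> by (intro mult_left_mono integral_subset_le abs_d_integrable) auto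
  also have "\<dots> \<le> B * C / 2"
    using mult_left_mono[OF C, of "B / 2"] \<open>0 \<le> B\<close> by simp
  finally show ?thesis .
qed

lemma velocity_bound:
  assumes z: "-e \<le> z" "z \<le> e"
    and G_bound: "\<And>r. r \<in> {-e..z} \<Longrightarrow> norm (G (a r)) \<le> M"
    and C: "integral {-e..e} (\<lambda>r. \<bar>d r\<bar>) \<le> C"
  shows "norm (b z) \<le> M * C / 2"
proof (rule pulse_weighted_bound[OF velocity_integral[OF z(1)] z(2) G_bound _ C])
  show "0 \<le> M" using G_bound[of "-e"] z by (simp add: order_trans[OF norm_ge_zero])
qed

lemma displacement_bound:
  assumes G_bound: "\<And>y. y \<in> cball X 1 \<Longrightarrow> norm (G y) \<le> M"
    and C: "integral {-e..e} (\<lambda>r. \<bar>d r\<bar>) \<le> C"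
    and small: "e * M * C < 1" and u: "u \<le> e"
  shows "dist (a u) X \<le> e * M * C"
proof -
  have "0 \<le> M" using G_bound[of X] by (simp add: order_trans[OF norm_ge_zero])
  moreover have "0 \<le> C" using C integral_nonneg[OF abs_d_integrable, of "-e" e] by simp
  ultimately have MC: "0 \<le> M * C" "0 \<le> e * M * C" using e_pos by simp_all
  have step: "dist (a t) X \<le> e * M * C"
    if t: "t \<in> {-e..e}" and near: "\<And>s. s \<in> {-e..<t} \<Longrightarrow> dist (a s) X < 1" for t
  proof (cases "t = -e")
    case True then show ?thesis using before_impulse(2)[of "-e"] MC by simp
  next
    case False
    then have "-e < t" using t by simp
    moreover have "continuous_on {-e..t} a" using a_cont by (rule continuous_on_subset) simp
    ultimately obtain z where z: "z \<in> {-e<..<t}" and mvt: "norm (a t - a (-e)) \<le> norm ((t - -e) *\<^sub>R b z)"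
      using mvt_general[of "-e" t a "\<lambda>z h. h *\<^sub>R b z"] a_deriv
      unfolding has_vector_derivative_def by blast
    have "norm (b z) \<le> M * C / 2"
    proof (rule velocity_bound[OF _ _ _ C])
      show "norm (G (a r)) \<le> M" if "r \<in> {-e..z}" for r
        using near[of r] that z by (intro G_bound) (auto simp: dist_commute)
    qed (use z t in auto)
    then have "(t + e) * norm (b z) \<le> (t + e) * (M * C / 2)"
      using \<open>-e < t\<close> by (intro mult_left_mono) auto
    moreover have "dist (a t) X \<le> (t + e) * norm (b z)"
      using mvt before_impulse(2)[of "-e"] \<open>-e < t\<close> by (simp add: dist_norm)
    ultimately have "dist (a t) X \<le> (t + e) * (M * C / 2)"
      by linarith
    also have "\<dots> \<le> (2 * e) * (M * C / 2)"
      using t MC by (intro mult_right_mono) auto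
    finally show ?thesis by simp
  qed
  show ?thesis
  proof (cases "u < -e")
    case True then show ?thesis using before_impulse(2)[of u] MC by simp
  next
    case False
    show ?thesis
      by (rule continuous_barrier[OF _ small step])
         (use False u in \<open>auto intro: continuous_on_subset[OF continuous_on_dist[OF a_cont continuous_on_const]]\<close>)
  qed
qed

lemma kick_estimate:
  assumes G_close: "\<And>r. r \<in> {-e..e} \<Longrightarrow> norm (G (a r) - G X) \<le> \<eta>"
    and C: "integral {-e..e} (\<lambda>r. \<bar>d r\<bar>) \<le> C"
  shows "norm (b e - (integral {-e..e} d / 2) *\<^sub>R G X) \<le> \<eta> * C / 2"
proof -
  have \<eta>: "0 \<le> \<eta>" using G_close[of "-e"] e_pos by (simp add: order_trans[OF norm_ge_zero])
  have d_int: "d integrable_on {-e..e}"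
    by (rule integrable_continuous_real) (rule continuous_on_subset[OF d_cont], simp)
  have "((\<lambda>r. (d r / 2) *\<^sub>R (G (a r) - G X)) has_integral
          b e - (integral {-e..e} d / 2) *\<^sub>R G X) {-e..e}"
    using has_integral_diff[OF velocity_integral[of e]
        has_integral_scaleR_left[OF has_integral_divide[OF integrable_integral[OF d_int]], of 2 "G X"]]
    using e_pos by (simp add: scaleR_diff_right)
  then show ?thesis
    by (rule pulse_weighted_bound[OF _ order_refl G_close \<eta> C])
qed

lemma integral_over_support:
  fixes g :: "real \<Rightarrow> 'b::banach"
  assumes "\<And>r. g r \<noteq> 0 \<Longrightarrow> d r \<noteq> 0"
  shows "integral UNIV g = integral {-e..e} g"
proof -
  have "(\<lambda>r. if r \<in> {-e..e} then g r else 0) = g"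
    using assms d_supp by (force simp: fun_eq_iff)
  then show ?thesis using integral_restrict_UNIV[of "{-e..e}" g] by simp
qed

lemma kick_near_half_force:
  assumes S: "cball X 1 \<subseteq> S"
    and G_bound: "\<And>y. y \<in> S \<Longrightarrow> norm (G y) \<le> M"
    and G_modulus: "\<And>y y'. y \<in> S \<Longrightarrow> y' \<in> S \<Longrightarrow> dist y' y < \<theta> \<Longrightarrow> dist (G y') (G y) < \<eta>"
    and C: "integral {-e..e} (\<lambda>r. \<bar>d r\<bar>) \<le> C"
    and small: "e * M * C < min 1 \<theta>"
    and mass: "\<bar>integral {-e..e} d - 1\<bar> \<le> \<gamma>"
  shows "norm (b e - (1/2) *\<^sub>R G X) \<le> \<eta> * C / 2 + M * \<gamma> / 2"
proof -
  have X: "X \<in> S" using S by auto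
  have "norm (G (a r) - G X) \<le> \<eta>" if "r \<in> {-e..e}" for r
  proof -
    have "dist (a r) X \<le> e * M * C"
      using displacement_bound[OF _ C] S G_bound small that by (auto simp: subset_iff)
    with small S have "a r \<in> S" "dist (a r) X < \<theta>"
      by (auto simp: subset_iff dist_commute)
    then show ?thesis using G_modulus[OF X] by (simp add: dist_norm less_imp_le)
  qed
  then have kick: "norm (b e - (integral {-e..e} d / 2) *\<^sub>R G X) \<le> \<eta> * C / 2"
    using kick_estimate C by blast
  define c where "c = integral {-e..e} d / 2"
  have "norm (c *\<^sub>R G X - (1/2) *\<^sub>R G X) = \<bar>integral {-e..e} d - 1\<bar> / 2 * norm (G X)"
    by (simp add: c_def scaleR_diff_left[symmetric] diff_divide_distrib[symmetric])
  also have "\<dots> \<le> \<gamma> / 2 * M"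
    using mass G_bound[OF X] by (intro mult_mono) auto
  finally have mass_error: "norm (c *\<^sub>R G X - (1/2) *\<^sub>R G X) \<le> \<gamma> / 2 * M" .
  have "norm (b e - (1/2) *\<^sub>R G X) \<le> norm (b e - c *\<^sub>R G X) + norm (c *\<^sub>R G X - (1/2) *\<^sub>R G X)"
    using norm_triangle_ineq[of "b e - c *\<^sub>R G X" "c *\<^sub>R G X - (1/2) *\<^sub>R G X"] by simp
  then show ?thesis
    using kick mass_error unfolding c_def by (simp add: mult.commute)
qed

end

section \<open>Uniform convergence of the kick\<close>

lemma strict_delta_netD:
  assumes "strict_delta_net \<delta>"
  shows "((\<lambda>e. integral UNIV (\<delta> e)) \<longlongrightarrow> 1) (at_right 0)"
    and "\<exists>C>0. \<forall>\<^sub>F e in at_right 0. integral UNIV (\<lambda>u. \<bar>\<delta> e u\<bar>) \<le> C"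
  using assms unfolding strict_delta_net_def by blast+

lemma force_bound_and_modulus:
  fixes G :: "'a::euclidean_space \<Rightarrow> 'b::real_normed_vector"
  assumes G_cont: "continuous_on UNIV G" and KX: "compact KX" and "\<eta> > 0"
  obtains S M \<theta> where "\<And>X. X \<in> KX \<Longrightarrow> cball X 1 \<subseteq> S" and "M > 0"
    and "\<And>y. y \<in> S \<Longrightarrow> norm (G y) \<le> M" and "\<theta> > 0"
    and "\<And>y y'. y \<in> S \<Longrightarrow> y' \<in> S \<Longrightarrow> dist y' y < \<theta> \<Longrightarrow> dist (G y') (G y) < \<eta>"
proof -
  obtain R where R: "\<And>X. X \<in> KX \<Longrightarrow> norm X \<le> R"
    using compact_imp_bounded[OF KX] by (auto simp: bounded_pos)
  define S where "S = cball (0::'a) (R + 1)"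
  have S: "compact S" "\<And>X. X \<in> KX \<Longrightarrow> cball X 1 \<subseteq> S"
    unfolding S_def by (auto dest!: R simp: dist_norm) (smt (verit) norm_minus_commute norm_triangle_sub)
  obtain M where "M > 0" and "\<And>y. y \<in> S \<Longrightarrow> norm (G y) \<le> M"
    using compact_imp_bounded[OF compact_continuous_image[OF continuous_on_subset[OF G_cont] S(1)]]
    by (auto simp: bounded_pos)
  moreover obtain \<theta> where "\<theta> > 0"
    and "\<And>y y'. y \<in> S \<Longrightarrow> y' \<in> S \<Longrightarrow> dist y' y < \<theta> \<Longrightarrow> dist (G y') (G y) < \<eta>"
    using compact_uniformly_continuous[OF continuous_on_subset[OF G_cont] S(1)] \<open>\<eta> > 0\<close>
    unfolding uniformly_continuous_on_def by (metis subset_UNIV)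
  ultimately show ?thesis using that S(2) by blast
qed

lemma kick_uniform_limit:
  fixes G :: "'a::euclidean_space \<Rightarrow> 'a" and a b :: "real \<Rightarrow> 'a \<Rightarrow> real \<Rightarrow> 'a"
  assumes G_cont: "continuous_on UNIV G" and delta: "strict_delta_net \<delta>"
    and KX: "compact KX" and "eK > 0"
    and traj: "\<And>X e. X \<in> KX \<Longrightarrow> e \<in> {0<..1} \<Longrightarrow> e \<le> eK \<Longrightarrow>
                 impulsive_trajectory e (\<delta> e) G (a e X) (b e X) X"
  shows "uniform_limit KX (\<lambda>e X. b e X e) (\<lambda>X. (1/2) *\<^sub>R G X) (at_right 0)"
proof (rule uniform_limitI)
  fix \<epsilon> :: real assume "0 < \<epsilon>"
  obtain C where "C > 0" and C_ev: "\<forall>\<^sub>F e in at_right 0. integral UNIV (\<lambda>u. \<bar>\<delta> e u\<bar>) \<le> C"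
    using strict_delta_netD(2)[OF delta] by blast
  define \<eta> where "\<eta> = \<epsilon> / (2 * C)"
  have "\<eta> > 0" using \<open>0 < \<epsilon>\<close> \<open>C > 0\<close> by (simp add: \<eta>_def)
  then obtain S M \<theta> where S: "\<And>X. X \<in> KX \<Longrightarrow> cball X 1 \<subseteq> S" and "M > 0"
    and M: "\<And>y. y \<in> S \<Longrightarrow> norm (G y) \<le> M" and "\<theta> > 0"
    and modulus: "\<And>y y'. y \<in> S \<Longrightarrow> y' \<in> S \<Longrightarrow> dist y' y < \<theta> \<Longrightarrow> dist (G y') (G y) < \<eta>"
    using force_bound_and_modulus[OF G_cont KX] by metis
  define \<gamma> where "\<gamma> = \<epsilon> / (2 * M)"
  have "\<gamma> > 0" and error: "\<eta> * C / 2 + M * \<gamma> / 2 < \<epsilon>"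
    using \<open>0 < \<epsilon>\<close> \<open>C > 0\<close> \<open>M > 0\<close> by (simp_all add: \<eta>_def \<gamma>_def)
  have range_ev: "\<forall>\<^sub>F e in at_right 0. e \<in> {0<..1} \<and> e \<le> eK"
    using \<open>eK > 0\<close> by (auto simp: eventually_at_right_field intro: exI[of _ "min 1 eK"])
  have short_ev: "\<forall>\<^sub>F e in at_right 0. e * M * C < min 1 \<theta>"
    using \<open>\<theta> > 0\<close> by (intro order_tendstoD tendsto_eq_intros) (auto intro: tendsto_ident_at)
  have mass_ev: "\<forall>\<^sub>F e in at_right 0. \<bar>integral UNIV (\<delta> e) - 1\<bar> < \<gamma>"
    using tendstoD[OF strict_delta_netD(1)[OF delta] \<open>\<gamma> > 0\<close>] by (simp add: dist_real_def)
  show "\<forall>\<^sub>F e in at_right 0. \<forall>X\<in>KX. dist (b e X e) ((1/2) *\<^sub>R G X) < \<epsilon>"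
    using range_ev short_ev C_ev mass_ev
  proof eventually_elim
    case (elim e)
    show ?case
    proof
      fix X assume "X \<in> KX"
      then interpret impulsive_trajectory e "\<delta> e" G "a e X" "b e X" X
        using traj elim(1) by blast
      have "norm (b e X e - (1/2) *\<^sub>R G X) \<le> \<eta> * C / 2 + M * \<gamma> / 2"
      proof (rule kick_near_half_force[OF S[OF \<open>X \<in> KX\<close>] M modulus _ elim(2)])
        show "integral {-e..e} (\<lambda>r. \<bar>\<delta> e r\<bar>) \<le> C"
          using elim(3) integral_over_support[of "\<lambda>r. \<bar>\<delta> e r\<bar>"] by simp
        show "\<bar>integral {-e..e} (\<delta> e) - 1\<bar> \<le> \<gamma>"
          using elim(4) integral_over_support[of "\<delta> e"] by simp
      qed
      with error show "dist (b e X e) ((1/2) *\<^sub>R G X) < \<epsilon>"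
        by (simp add: dist_norm)
    qed
  qed
qed

lemma smooth_continuous: "smooth g \<Longrightarrow> continuous_on UNIV g"
  unfolding smooth_def by (metis empty_subsetI empty_set iter_pd.simps(1))

lemma smooth_directional_differentiable:
  "smooth g \<Longrightarrow> v \<in> Basis \<Longrightarrow> (\<lambda>t. g (y + t *\<^sub>R v)) differentiable (at 0)"
  unfolding smooth_def by (metis empty_subsetI empty_set iter_pd.simps(1))

lemma smooth_partial_continuous: "smooth g \<Longrightarrow> v \<in> Basis \<Longrightarrow> continuous_on UNIV (pdir v g)"
  unfolding smooth_def by (drule spec[of _ "[v]"]) auto

text \<open>Derivative of a translate; it identifies the partial derivatives pd1 and pd2 with the
  directional derivatives pdir along the basis vectors.\<close>
lemma deriv_translate:
  fixes h :: "real \<Rightarrow> real"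
  assumes "h differentiable (at 0)"
  shows "deriv (\<lambda>s. h (s - c)) c = vector_derivative h (at 0)"
proof -
  have "(h has_real_derivative vector_derivative h (at 0)) (at (c - c))"
    using assms by (simp add: has_real_derivative_iff_has_vector_derivative vector_derivative_works)
  then have "((\<lambda>s. h (s - c)) has_real_derivative vector_derivative h (at 0) * 1) (at c)"
    by (rule DERIV_chain2) (auto intro!: derivative_eq_intros)
  then show ?thesis by (simp add: DERIV_imp_deriv)
qed

lemma pd1_eq_pdir: "smooth f \<Longrightarrow> pd1 f y = pdir (1, 0) f y"
  using deriv_translate[OF smooth_directional_differentiable[of f "(1, 0)" y], of "fst y"]
  by (cases y) (simp add: pd1_def pdir_def Basis_prod_def)

lemma pd2_eq_pdir: "smooth f \<Longrightarrow> pd2 f y = pdir (0, 1) f y"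
  using deriv_translate[OF smooth_directional_differentiable[of f "(0, 1)" y], of "snd y"]
  by (cases y) (simp add: pd2_def pdir_def Basis_prod_def)

definition grad :: "(real \<times> real \<Rightarrow> real) \<Rightarrow> real \<times> real \<Rightarrow> real \<times> real" where
  "grad f y = (pd1 f y, pd2 f y)"

lemma grad_continuous:
  assumes "smooth f"
  shows "continuous_on UNIV (grad f)"
proof -
  have "continuous_on UNIV (pd1 f)" "continuous_on UNIV (pd2 f)"
    using smooth_partial_continuous[OF assms, of "(1, 0)"] smooth_partial_continuous[OF assms, of "(0, 1)"]
      pd1_eq_pdir[OF assms] pd2_eq_pdir[OF assms]
    by (simp_all add: Basis_prod_def fun_eq_iff[symmetric])
  then show ?thesis unfolding grad_def by (intro continuous_intros)
qed

lemma strict_delta_net_pulse: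
  assumes "strict_delta_net \<delta>" and "e \<in> {0<..1}"
  shows "continuous_on UNIV (\<delta> e)" and "\<And>r. \<delta> e r \<noteq> 0 \<Longrightarrow> r \<in> {-e..e}"
  using assms smooth_continuous unfolding strict_delta_net_def by blast+

lemma trajectory_of_ode:
  assumes f: "smooth f" and \<delta>: "strict_delta_net \<delta>" and e: "e \<in> {0<..1}"
    and ode: "x e X (-1) = X \<and> xd x e X (-1) = (0, 0) \<and>
        (\<forall>U. ((\<lambda>u. x e X u) has_vector_derivative xd x e X U) (at U) \<and>
             (xd x e X has_vector_derivative
                ((1/2) * pd1 f (x e X U) * \<delta> e U, (1/2) * pd2 f (x e X U) * \<delta> e U)) (at U))"
  shows "impulsive_trajectory e (\<delta> e) (grad f) (x e X) (xd x e X) X"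
proof
  have "((1/2) * pd1 f (x e X U) * \<delta> e U, (1/2) * pd2 f (x e X U) * \<delta> e U)
      = (\<delta> e U / 2) *\<^sub>R grad f (x e X U)" for U
    by (simp add: grad_def)
  then show "(xd x e X has_vector_derivative (\<delta> e U / 2) *\<^sub>R grad f (x e X U)) (at U)" for U
    using ode by metis
qed (use e ode grad_continuous[OF f] strict_delta_net_pulse[OF \<delta> e] in \<open>auto simp: zero_prod_def\<close>)

section \<open>U-derivatives of the transformations\<close>

text \<open>In terms of the velocity v, the U-derivative of s is \<open>(1, v, |v|\<^sup>2)\<close>, for the nets as well
  as for the limit.\<close>
definition velocity_frame :: "real \<times> real \<Rightarrow> real \<times> real \<times> real \<times> real" where
  "velocity_frame v = (1, fst v, snd v, (norm v)\<^sup>2)"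

lemma vector_derivative_frame:
  fixes p :: "real \<Rightarrow> real \<times> real" and g :: "real \<Rightarrow> real"
  assumes p: "(p has_vector_derivative p') (at U)" and g: "(g has_real_derivative g') (at U)"
  shows "vector_derivative (\<lambda>u. (u, fst (p u), snd (p u), g u)) (at U) = (1, fst p', snd p', g')"
proof (rule vector_derivative_at)
  have "((\<lambda>u. fst (p u)) has_vector_derivative fst p') (at U)"
    "((\<lambda>u. snd (p u)) has_vector_derivative snd p') (at U)"
    using p unfolding has_vector_derivative_def
    by (auto intro!: derivative_eq_intros simp: fun_eq_iff)
  then show "((\<lambda>u. (u, fst (p u), snd (p u), g u)) has_vector_derivative (1, fst p', snd p', g')) (at U)"
    using g by (auto simp: has_real_derivative_iff_has_vector_derivative
        intro!: has_vector_derivative_Pair has_vector_derivative_id)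
qed

context
  fixes f :: "real \<times> real \<Rightarrow> real" and \<delta> :: "real \<Rightarrow> real \<Rightarrow> real"
    and x :: "real \<Rightarrow> real \<times> real \<Rightarrow> real \<Rightarrow> real \<times> real" and e :: real and X1 X2 :: real
  assumes traj: "impulsive_trajectory e (\<delta> e) (grad f) (x e (X1, X2)) (xd x e (X1, X2)) (X1, X2)"
begin

interpretation impulsive_trajectory e "\<delta> e" "grad f" "x e (X1, X2)" "xd x e (X1, X2)" "(X1, X2)"
  by (fact traj)

lemma w_eps_eq_speed_integral:
  "w_eps f \<delta> x e (X1, X2) V u = V + oint (-e) u (\<lambda>s. (norm (xd x e (X1, X2) s))\<^sup>2)"
  using speed_squared by (simp add: w_eps_def grad_def inner_prod_def)
lemma dU_s_eps:
  "dU (s_eps f \<delta> x e) (U, X1, X2, V) = velocity_frame (xd x e (X1, X2) U)"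
proof -
  have "((\<lambda>u. w_eps f \<delta> x e (X1, X2) V u) has_real_derivative (norm (xd x e (X1, X2) U))\<^sup>2) (at U)"
    unfolding w_eps_eq_speed_integral
    by (auto intro!: derivative_eq_intros oint_has_real_derivative continuous_intros b_cont)
  then show ?thesis
    by (simp add: dU_def s_eps_def velocity_frame_def vector_derivative_frame[OF a_deriv])
qed

lemma dU_t_eps:
  assumes f_cont: "continuous_on UNIV f"
  shows "dU (t_eps f \<delta> x e) (U, X1, X2, V) =
     velocity_frame (xd x e (X1, X2) U) + (0, 0, 0, f (x e (X1, X2) U) * \<delta> e U)"
proof -
  have "continuous_on UNIV (\<lambda>s. f (x e (X1, X2) s) * \<delta> e s)"
    by (intro continuous_intros d_cont continuous_on_compose2[OF f_cont a_cont]) auto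
  then have "((\<lambda>u. v_eps f \<delta> x e (X1, X2) V u) has_real_derivative
      (norm (xd x e (X1, X2) U))\<^sup>2 + f (x e (X1, X2) U) * \<delta> e U) (at U)"
    unfolding v_eps_def w_eps_eq_speed_integral
    by (auto intro!: derivative_eq_intros oint_has_real_derivative continuous_intros b_cont)
  then show ?thesis
    by (simp add: dU_def t_eps_def velocity_frame_def vector_derivative_frame[OF a_deriv])
qed

end

lemma posp_heav_derivatives:
  assumes "U \<noteq> 0"
  shows "(posp has_real_derivative heav U) (at U)" and "(heav has_real_derivative 0) (at U)"
proof -
  define S where "S = (if U > 0 then {0<..} else {..<0::real})"
  have S: "open S" "U \<in> S" using assms by (auto simp: S_def)
  have agree: "posp u = heav U * u \<and> heav u = heav U" if "u \<in> S" for u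
  proof (cases "U > 0")
    case True then show ?thesis using that by (simp add: S_def posp_def heav_def)
  next
    case False then show ?thesis using that by (simp add: S_def posp_def heav_def)
  qed
  have "((\<lambda>u. heav U * u) has_real_derivative heav U) (at U)"
    by (auto intro!: derivative_eq_intros)
  then show "(posp has_real_derivative heav U) (at U)"
    by (rule has_field_derivative_transform_within_open[OF _ S]) (simp add: agree)
  show "(heav has_real_derivative 0) (at U)"
    by (rule has_field_derivative_transform_within_open[OF DERIV_const S]) (simp add: agree)
qed

lemma norm_heav_half_grad:
  "(norm (heav U *\<^sub>R (1/2) *\<^sub>R grad f y))\<^sup>2 = 1/4 * ((pd1 f y)\<^sup>2 + (pd2 f y)\<^sup>2) * heav U"
  by (cases "U > 0") (simp_all add: heav_def grad_def norm_Pair power_divide)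

lemma x_lim_has_vector_derivative:
  assumes "U \<noteq> 0"
  shows "(x_lim f X has_vector_derivative heav U *\<^sub>R (1/2) *\<^sub>R grad f X) (at U)"
proof -
  have "x_lim f X = (\<lambda>u. X + (posp u / 2) *\<^sub>R grad f X)"
    by (cases X) (auto simp: x_lim_def grad_def fun_eq_iff)
  then show ?thesis
    using posp_heav_derivatives(1)[OF assms]
    by (auto simp: has_real_derivative_iff_has_vector_derivative intro!: derivative_eq_intros)
qed

lemma dU_s_lim:
  assumes "U \<noteq> 0"
  shows "dU (s_lim f) (U, X1, X2, V) = velocity_frame (heav U *\<^sub>R (1/2) *\<^sub>R grad f (X1, X2))"
proof -
  have "((\<lambda>u. w_lim f (X1, X2) V u) has_real_derivative
      1/4 * ((pd1 f (X1, X2))\<^sup>2 + (pd2 f (X1, X2))\<^sup>2) * heav U) (at U)"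
    unfolding w_lim_def by (auto intro!: derivative_eq_intros posp_heav_derivatives[OF assms])
  then show ?thesis
    unfolding velocity_frame_def norm_heav_half_grad
    by (simp add: dU_def s_lim_def vector_derivative_frame[OF x_lim_has_vector_derivative[OF assms]])
qed

lemma dU_t_lim:
  assumes "U \<noteq> 0"
  shows "dU (t_lim f) (U, X1, X2, V) = velocity_frame (heav U *\<^sub>R (1/2) *\<^sub>R grad f (X1, X2))"
proof -
  have "((\<lambda>u. v_lim f (X1, X2) V u) has_real_derivative
      1/4 * ((pd1 f (X1, X2))\<^sup>2 + (pd2 f (X1, X2))\<^sup>2) * heav U) (at U)"
    unfolding v_lim_def by (auto intro!: derivative_eq_intros posp_heav_derivatives[OF assms])
  then show ?thesis
    unfolding velocity_frame_def norm_heav_half_grad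
    by (simp add: dU_def t_lim_def vector_derivative_frame[OF x_lim_has_vector_derivative[OF assms]])
qed

lemma dU_eps_outside_impulse:
  assumes f_cont: "continuous_on UNIV f"
    and traj: "impulsive_trajectory e (\<delta> e) (grad f) (x e (X1, X2)) (xd x e (X1, X2)) (X1, X2)"
    and outside: "e < \<bar>U\<bar>"
  shows "dU (s_eps f \<delta> x e) (U, X1, X2, V) = velocity_frame (heav U *\<^sub>R xd x e (X1, X2) e)"
    and "dU (t_eps f \<delta> x e) (U, X1, X2, V) = velocity_frame (heav U *\<^sub>R xd x e (X1, X2) e)"
proof -
  interpret impulsive_trajectory e "\<delta> e" "grad f" "x e (X1, X2)" "xd x e (X1, X2)" "(X1, X2)"
    by (fact traj)
  have "\<delta> e U = 0" using d_vanishes[of U] outside by linarith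
  moreover have "xd x e (X1, X2) U = heav U *\<^sub>R xd x e (X1, X2) e"
    using before_impulse(1)[of U] after_impulse[of U] outside by (auto simp: heav_def)
  ultimately show "dU (s_eps f \<delta> x e) (U, X1, X2, V) = velocity_frame (heav U *\<^sub>R xd x e (X1, X2) e)"
    and "dU (t_eps f \<delta> x e) (U, X1, X2, V) = velocity_frame (heav U *\<^sub>R xd x e (X1, X2) e)"
    using dU_s_eps[where \<delta>=\<delta>, OF traj] dU_t_eps[where \<delta>=\<delta>, OF traj f_cont] by (simp_all add: zero_prod_def)
qed

section \<open>Uniform convergence of the U-derivatives\<close>

lemma uniform_limit_continuous_compose:
  fixes \<phi> :: "'a::euclidean_space \<Rightarrow> 'b::metric_space"
  assumes lim: "uniform_limit S g g0 F" and bdd: "bounded (g0 ` S)"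
    and \<phi>: "continuous_on UNIV \<phi>"
  shows "uniform_limit S (\<lambda>n s. \<phi> (g n s)) (\<lambda>s. \<phi> (g0 s)) F"
proof -
  obtain B where B: "\<And>s. s \<in> S \<Longrightarrow> norm (g0 s) \<le> B"
    using bdd by (auto simp: bounded_iff)
  define U where "U = cball (0::'a) (B + 1)"
  have "uniformly_continuous_on U \<phi>"
    by (rule compact_uniformly_continuous[OF continuous_on_subset[OF \<phi>]]) (auto simp: U_def)
  moreover have "\<forall>\<^sub>F n in F. g n ` S \<subseteq> U"
    using uniform_limitD[OF lim zero_less_one]
  proof eventually_elim
    case (elim n)
    have "norm (g n s) \<le> B + 1" if "s \<in> S" for s
      using elim that B[OF that] norm_triangle_sub[of "g n s" "g0 s"] by (auto simp: dist_norm)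
    then show ?case by (auto simp: U_def)
  qed
  moreover have "g0 ` S \<subseteq> U" using B by (force simp: U_def)
  ultimately show ?thesis
    using uniform_limit_compose[OF lim] by (simp add: o_def)
qed

lemma compact_away_from_zero:
  assumes "compact K" and "\<And>p. p \<in> K \<Longrightarrow> fst p \<noteq> (0::real)"
  obtains c where "c > 0" and "\<And>p. p \<in> K \<Longrightarrow> c \<le> \<bar>fst p\<bar>"
proof (cases "K = {}")
  case True then show ?thesis using that[of 1] by simp
next
  case False
  have "continuous_on K (\<lambda>p. \<bar>fst p\<bar>)" by (intro continuous_intros)
  then obtain p0 where "p0 \<in> K" and "\<And>p. p \<in> K \<Longrightarrow> \<bar>fst p0\<bar> \<le> \<bar>fst p\<bar>"
    using continuous_attains_inf[OF assms(1) False] by blast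
  then show ?thesis using that[of "\<bar>fst p0\<bar>"] assms(2) by auto
qed

definition xcoords :: "real \<times> real \<times> real \<times> real \<Rightarrow> real \<times> real" where
  "xcoords p = (fst (snd p), fst (snd (snd p)))"

text \<open>On a compact set avoiding \<open>U = 0\<close>, all points are eventually outside the pulse.\<close>
lemma dU_eps_eventually_frame:
  fixes K :: "(real \<times> real \<times> real \<times> real) set"
  assumes f_cont: "continuous_on UNIV f" and K: "compact K" and K0: "\<And>p. p \<in> K \<Longrightarrow> fst p \<noteq> 0"
    and "eK > 0"
    and traj: "\<And>X e. X \<in> xcoords ` K \<Longrightarrow> e \<in> {0<..1} \<Longrightarrow> e \<le> eK \<Longrightarrow>
                 impulsive_trajectory e (\<delta> e) (grad f) (x e X) (xd x e X) X"
  shows "\<forall>\<^sub>F e in at_right 0. \<forall>p\<in>K.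
           dU (s_eps f \<delta> x e) p = velocity_frame (heav (fst p) *\<^sub>R xd x e (xcoords p) e) \<and>
           dU (t_eps f \<delta> x e) p = velocity_frame (heav (fst p) *\<^sub>R xd x e (xcoords p) e)"
proof -
  obtain c where "c > 0" and c: "\<And>p. p \<in> K \<Longrightarrow> c \<le> \<bar>fst p\<bar>"
    using compact_away_from_zero[OF K K0] by blast
  have "\<forall>\<^sub>F e in at_right 0. e \<in> {0<..1} \<and> e \<le> eK \<and> e < c"
    using \<open>eK > 0\<close> \<open>c > 0\<close> unfolding eventually_at_right_field
    by (intro exI[of _ "min 1 (min eK c)"]) auto
  then show ?thesis
  proof eventually_elim
    case (elim e)
    show ?case
    proof
      fix p assume "p \<in> K"
      obtain U X1 X2 V where p: "p = (U, X1, X2, V)" by (cases p) auto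
      have "e < \<bar>U\<bar>" using c[OF \<open>p \<in> K\<close>] elim p by simp
      moreover have "impulsive_trajectory e (\<delta> e) (grad f) (x e (X1, X2)) (xd x e (X1, X2)) (X1, X2)"
        using traj[of "(X1, X2)" e] \<open>p \<in> K\<close> elim by (force simp: p xcoords_def)
      ultimately show "dU (s_eps f \<delta> x e) p = velocity_frame (heav (fst p) *\<^sub>R xd x e (xcoords p) e) \<and>
           dU (t_eps f \<delta> x e) p = velocity_frame (heav (fst p) *\<^sub>R xd x e (xcoords p) e)"
        using dU_eps_outside_impulse[OF f_cont] by (simp add: p xcoords_def)
    qed
  qed
qed

lemma uniform_limit_velocity_frame:
  assumes lim: "uniform_limit K g g0 F" and bdd: "bounded (g0 ` K)"
  shows "uniform_limit K (\<lambda>n p. velocity_frame (heav (fst p) *\<^sub>R g n p))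
                         (\<lambda>p. velocity_frame (heav (fst p) *\<^sub>R g0 p)) F"
proof (rule uniform_limit_continuous_compose[where \<phi> = velocity_frame])
  show "uniform_limit K (\<lambda>n p. heav (fst p) *\<^sub>R g n p) (\<lambda>p. heav (fst p) *\<^sub>R g0 p) F"
    by (intro uniform_limit_intros lim bdd) (auto simp: heav_def bounded_iff intro!: exI[of _ 1])
  from bdd obtain B where "\<forall>p\<in>K. norm (g0 p) \<le> B" by (auto simp: bounded_iff)
  then show "bounded ((\<lambda>p. heav (fst p) *\<^sub>R g0 p) ` K)"
    by (auto simp: bounded_iff heav_def intro!: exI[of _ "max B 0"])
  show "continuous_on UNIV velocity_frame"
    unfolding velocity_frame_def by (intro continuous_intros)
qed

lemma framed_kick_uniform_limit:
  fixes K :: "(real \<times> real \<times> real \<times> real) set"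
  assumes f_smooth: "smooth f" and delta: "strict_delta_net \<delta>" and K: "compact K" and "eK > 0"
    and traj: "\<And>X e. X \<in> xcoords ` K \<Longrightarrow> e \<in> {0<..1} \<Longrightarrow> e \<le> eK \<Longrightarrow>
                 impulsive_trajectory e (\<delta> e) (grad f) (x e X) (xd x e X) X"
  shows "uniform_limit K (\<lambda>e p. velocity_frame (heav (fst p) *\<^sub>R xd x e (xcoords p) e))
           (\<lambda>p. velocity_frame (heav (fst p) *\<^sub>R (1/2) *\<^sub>R grad f (xcoords p))) (at_right 0)"
proof (rule uniform_limit_velocity_frame)
  have "compact (xcoords ` K)"
    unfolding xcoords_def by (intro compact_continuous_image continuous_intros K)
  from kick_uniform_limit[OF grad_continuous[OF f_smooth] delta this \<open>eK > 0\<close> traj]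
  show "uniform_limit K (\<lambda>e p. xd x e (xcoords p) e) (\<lambda>p. (1/2) *\<^sub>R grad f (xcoords p)) (at_right 0)"
    by (rule uniform_limit_compose') auto
  show "bounded ((\<lambda>p. (1/2) *\<^sub>R grad f (xcoords p)) ` K)"
    unfolding xcoords_def
    by (intro compact_imp_bounded compact_continuous_image K continuous_intros
        continuous_on_compose2[OF grad_continuous[OF f_smooth]]) auto
qed

lemma dU_lim_frame:
  assumes "fst p \<noteq> 0"
  shows "dU (s_lim f) p = velocity_frame (heav (fst p) *\<^sub>R (1/2) *\<^sub>R grad f (xcoords p))"
    and "dU (t_lim f) p = velocity_frame (heav (fst p) *\<^sub>R (1/2) *\<^sub>R grad f (xcoords p))"
  using assms dU_s_lim dU_t_lim by (cases p, simp add: xcoords_def)+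

theorem proposition7p1:
  fixes f :: "real \<times> real \<Rightarrow> real"
    and \<delta> :: "real \<Rightarrow> real \<Rightarrow> real"
    and x :: "real \<Rightarrow> real \<times> real \<Rightarrow> real \<Rightarrow> real \<times> real"
  assumes f_smooth: "smooth f"
    and delta: "strict_delta_net \<delta>"
    and x_smooth: "\<forall>e\<in>{0<..1}. smooth (\<lambda>q :: (real \<times> real) \<times> real. x e (fst q) (snd q))"
    and x_ode: "\<forall>K :: (real \<times> real) set. compact K \<longrightarrow> (\<exists>eK>0. \<forall>X\<in>K. \<forall>e\<in>{0<..1}. e \<le> eK \<longrightarrow>
        x e X (-1) = X \<and> xd x e X (-1) = (0, 0) \<and>
        (\<forall>U. ((\<lambda>u. x e X u) has_vector_derivative xd x e X U) (at U) \<and>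
             (xd x e X has_vector_derivative
                ((1/2) * pd1 f (x e X U) * \<delta> e U, (1/2) * pd2 f (x e X U) * \<delta> e U)) (at U)))"
  shows "\<forall>K. compact K \<and> K \<subseteq> {p. fst p \<noteq> 0} \<longrightarrow>
           uniform_limit K (\<lambda>e. dU (t_eps f \<delta> x e)) (dU (t_lim f)) (at_right 0)
         \<and> uniform_limit K (\<lambda>e. dU (s_eps f \<delta> x e)) (dU (s_lim f)) (at_right 0)"
proof (intro allI impI)
  fix K :: "(real \<times> real \<times> real \<times> real) set"
  assume "compact K \<and> K \<subseteq> {p. fst p \<noteq> 0}"
  then have K: "compact K" and K0: "\<And>p. p \<in> K \<Longrightarrow> fst p \<noteq> 0" by auto
  have "compact (xcoords ` K)"
    unfolding xcoords_def by (intro compact_continuous_image continuous_intros K)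
  then obtain eK where "eK > 0" and traj: "\<And>X e. X \<in> xcoords ` K \<Longrightarrow> e \<in> {0<..1} \<Longrightarrow> e \<le> eK \<Longrightarrow>
      impulsive_trajectory e (\<delta> e) (grad f) (x e X) (xd x e X) X"
    using x_ode trajectory_of_ode[OF f_smooth delta] by meson
  note framed = framed_kick_uniform_limit[OF f_smooth delta K \<open>eK > 0\<close> traj]
  note eventually_framed = dU_eps_eventually_frame[OF smooth_continuous[OF f_smooth] K K0 \<open>eK > 0\<close> traj]
  show "uniform_limit K (\<lambda>e. dU (t_eps f \<delta> x e)) (dU (t_lim f)) (at_right 0)
      \<and> uniform_limit K (\<lambda>e. dU (s_eps f \<delta> x e)) (dU (s_lim f)) (at_right 0)"
    by (intro conjI uniform_limit_cong[THEN iffD1, OF _ _ framed])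
       (use eventually_framed dU_lim_frame K0 in \<open>auto elim!: eventually_mono\<close>)
qed

end
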